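(* For every integer $\nu\ge0$ and every positive integer $n$, $g_\nu(n,0)\neq0$.
   Context: Falling factorial: $(x)_m=x(x-1)\cdots(x-m+1)$ for $m\ge1$, $(x)_0=1$, $(x)_m=1/(x)_{-m}$ for $m\le-1$. $$g_\nu(n,k):=\frac{(2\nu-1)\,(2\nu-2)_{\nu-1}^2}{2^{2\nu-2}}\sum_{r=0}^{\nu}(-1)^{\nu+r}\frac{2\nu-2r-1}{(2r)!\,(2\nu-2r)!}(6k+1)^{2r}\big(24n-(6k+1)^2\big)^{\nu-r}.$$ *)

theory Defs
  imports Complex_Main
begin

definition falling_fact :: "real \<Rightarrow> int \<Rightarrow> real" where
  "falling_fact x m =
     (if m \<ge> 0 then (\<Prod>i<nat m. x - of_nat i)
      else 1 / (\<Prod>i<nat (-m). x - of_nat i))"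

definition g :: "nat \<Rightarrow> int \<Rightarrow> int \<Rightarrow> real" where
  "g \<nu> n k =
     (2 * real \<nu> - 1) * (falling_fact (2 * real \<nu> - 2) (int \<nu> - 1))^2
       / (2 powi (2 * int \<nu> - 2))
     * (\<Sum>r = 0..\<nu>. (-1)^(\<nu> + r) * (2 * real \<nu> - 2 * real r - 1)
            / (fact (2 * r) * fact (2 * \<nu> - 2 * r))
            * (6 * real_of_int k + 1)^(2 * r)
            * (24 * real_of_int n - (6 * real_of_int k + 1)^2)^(\<nu> - r))"

end

theory Submission
  imports Defs
begin

text \<open>At \<open>k = 0\<close> we have \<open>6k + 1 = 1\<close>, so after clearing the denominator \<open>(2\<nu>)!\<close> the sum in
  \<open>g\<^sub>\<nu>(n,0)\<close> becomes an integer polynomial in \<open>m = 24n - 1\<close> whose constant term (from \<open>r = \<nu>\<close>) is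
  \<open>-1\<close>. Hence the sum is \<open>\<equiv> -1 (mod m)\<close> and cannot vanish, because \<open>m > 1\<close>. The prefactor of the sum
  is nonzero because \<open>2\<nu> - 2\<close> is not among the roots \<open>0, \<dots>, \<nu> - 2\<close> of the falling factorial.\<close>

lemma falling_fact_eq_0_iff:
  "falling_fact x m = 0 \<longleftrightarrow> (\<exists>i < nat \<bar>m\<bar>. x = real i)"
  by (auto simp: falling_fact_def prod_zero_iff)

lemma falling_fact_g_prefactor_nonzero:
  "falling_fact (2 * real \<nu> - 2) (int \<nu> - 1) \<noteq> 0"
  unfolding falling_fact_eq_0_iff by (cases "\<nu> = 0") auto

definition g_coeff :: "nat \<Rightarrow> nat \<Rightarrow> int" where
  "g_coeff \<nu> r = (-1)^(\<nu> + r) * (2 * int \<nu> - 2 * int r - 1) * int (2 * \<nu> choose 2 * r)"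

lemma g_coeff_top: "g_coeff \<nu> \<nu> = -1"
  by (simp add: g_coeff_def mult_2[symmetric] power_mult)

lemma g_summand_at_0:
  assumes "r \<le> \<nu>"
  shows "(-1)^(\<nu> + r) * (2 * real \<nu> - 2 * real r - 1)
            / (fact (2 * r) * fact (2 * \<nu> - 2 * r))
            * (6 * real_of_int 0 + 1)^(2 * r)
            * (24 * real_of_int n - (6 * real_of_int 0 + 1)^2)^(\<nu> - r)
         = real_of_int (g_coeff \<nu> r * (24 * n - 1)^(\<nu> - r)) / fact (2 * \<nu>)"
proof -
  have "2 * r \<le> 2 * \<nu>" using assms by simp
  then have fact_split: "fact (2 * \<nu>) = fact (2 * r) * fact (2 * \<nu> - 2 * r) * real (2 * \<nu> choose 2 * r)"
    by (metis binomial_fact_lemma mult.commute of_nat_fact of_nat_mult)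
  have "real (2 * \<nu> choose 2 * r) \<noteq> 0"
    using \<open>2 * r \<le> 2 * \<nu>\<close> by simp
  then show ?thesis
    unfolding g_coeff_def fact_split by (simp add: field_simps)
qed

lemma g_sum_at_0:
  "(\<Sum>r = 0..\<nu>. (-1)^(\<nu> + r) * (2 * real \<nu> - 2 * real r - 1)
            / (fact (2 * r) * fact (2 * \<nu> - 2 * r))
            * (6 * real_of_int 0 + 1)^(2 * r)
            * (24 * real_of_int n - (6 * real_of_int 0 + 1)^2)^(\<nu> - r))
   = real_of_int (\<Sum>r = 0..\<nu>. g_coeff \<nu> r * (24 * n - 1)^(\<nu> - r)) / fact (2 * \<nu>)"
  unfolding of_int_sum sum_divide_distrib by (intro sum.cong refl g_summand_at_0) simp

lemma dvd_sum_minus_const_term: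
  fixes m :: "'a :: comm_ring_1"
  shows "m dvd (\<Sum>r = 0..\<nu>. a r * m^(\<nu> - r)) - a \<nu>"
proof -
  have "(\<Sum>r = 0..\<nu>. a r * m^(\<nu> - r)) - a \<nu> = (\<Sum>r = 0..<\<nu>. a r * m^(\<nu> - r))"
    by (simp add: atLeastLessThanSuc_atLeastAtMost[symmetric])
  also have "m dvd \<dots>"
  proof (rule dvd_sum)
    fix r assume "r \<in> {0..<\<nu>}"
    then have "\<nu> - r = Suc (\<nu> - r - 1)" by simp
    then show "m dvd a r * m^(\<nu> - r)" by (metis dvd_mult dvd_triv_left power_Suc)
  qed
  finally show ?thesis .
qed

lemma g_int_sum_nonzero:
  fixes m :: int
  assumes "m > 1"
  shows "(\<Sum>r = 0..\<nu>. g_coeff \<nu> r * m^(\<nu> - r)) \<noteq> 0"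
proof
  assume "(\<Sum>r = 0..\<nu>. g_coeff \<nu> r * m^(\<nu> - r)) = 0"
  then have "m dvd 1"
    using dvd_sum_minus_const_term[of m "g_coeff \<nu>" \<nu>] by (simp add: g_coeff_top)
  with assms show False by (simp add: zdvd_imp_le)
qed

theorem mainTheorem5:
  fixes \<nu> :: nat and n :: int
  assumes "n > 0"
  shows "g \<nu> n 0 \<noteq> 0"
proof -
  have "2 * real \<nu> - 1 \<noteq> 0"
  proof
    assume "2 * real \<nu> - 1 = 0"
    then have "2 * \<nu> = 1" by linarith
    then show False by presburger
  qed
  moreover have "(\<Sum>r = 0..\<nu>. g_coeff \<nu> r * (24 * n - 1)^(\<nu> - r)) \<noteq> 0"
    using assms by (intro g_int_sum_nonzero) simp
  ultimately show ?thesis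
    unfolding g_def g_sum_at_0 using falling_fact_g_prefactor_nonzero
    by (simp del: of_int_sum add: of_int_sum[symmetric])
qed

end
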